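(* Let $A$ be a calibrated $R$-superalgebra with basis $B^A=B^A_{\mathfrak a}\sqcup B^A_{\mathfrak c}\sqcup B^A_{\bar1}$, and let $e\in\mathfrak a$ be an idempotent such that $be=b$ or $be=0$ for every $b\in B^A$. Regard $Ae$ as a calibrated $A$-supermodule with $(Ae)_{\mathfrak a}=\mathfrak ae$ and $(Ae)_{\mathfrak c}=\mathfrak ce$. Then $\tilde\Gamma^d(Ae)\cong(\tilde\Gamma^dA)\,\eta^{e^d}$ as $\tilde\Gamma^dA$-supermodules, where $\eta^{e^d}=e^{\otimes d}$.
   Context: Let $R$ be a principal ideal domain of characteristic $0$. A calibrated $R$-supermodule is a free $R$-supermodule $V=V_{\bar0}\oplus V_{\bar1}$ of finite rank with a decomposition $V_{\bar0}=V_{\mathfrak a}\oplus V_{\mathfrak c}$ into free $R$-submodules, with chosen bases $B_{\mathfrak a},B_{\mathfrak c},B_{\bar1}$ and a total order on their union $B$. $\mathfrak S_d$ acts on $V^{\otimes d}$ by $(v_1\otimes\cdots\otimes v_d)^\sigma=(-1)^{\langle\sigma;\mathbf v\rangle}v_{\sigma1}\otimes\cdots\otimes v_{\sigma d}$, with $\langle\sigma;\mathbf v\rangle$ the number of $k<l$ with $\sigma^{-1}k>\sigma^{-1}l$ and $v_k,v_l$ odd; $\Gamma^dV$ = invariants. For $\mathbf b\in B^d$: $\langle\mathbf b\rangle$ = number of $k<l$ with $b_k,b_l\in B_{\bar1}$ and $b_k>b_l$; $[\mathbf b]^!_{\mathfrak c}=\prod_{b\in B_{\mathfrak c}}\#\{k:b_k=b\}!$;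 $\mathrm{Seq}(B,d)$ = tuples in which only even basis elements may repeat; $x_{\mathbf b}=\sum(-1)^{\langle\mathbf b\rangle+\langle\mathbf b'\rangle}b'_1\otimes\cdots\otimes b'_d$ over distinct place-permutations $\mathbf b'$ of $\mathbf b$; $y_{\mathbf b}=[\mathbf b]^!_{\mathfrak c}x_{\mathbf b}$; $\tilde\Gamma^dV=\mathrm{span}_R\{y_{\mathbf b}\}$. A calibrated $R$-superalgebra is an $R$-superalgebra $A$, free of finite rank, with $A_{\bar0}=\mathfrak a\oplus\mathfrak c$ (free $R$-submodules), $\mathfrak a$ a unital subalgebra; for $\mathbf a\in\mathrm{Seq}(B^A,d)$ write $\eta^{\mathbf a}=y_{\mathbf a}\in\tilde\Gamma^dA$. $\tilde\Gamma^dA$ is a unital subsuperalgebra of the superalgebra $A^{\otimes d}$ (product $(a_1\otimes\cdots)(b_1\otimes\cdots)=(-1)^{\langle\mathbf a,\mathbf b\rangle}a_1b_1\otimes\cdots$, $\langle\mathbf a,\mathbf b\rangle$ = number of $k>l$ with $a_k,b_l$ odd). A calibrated $A$-supermodule is an $A$-supermodule which is calibrated with $\mathfrak aV_{\mathfrak a}\subseteq V_{\mathfrak a}$; for such $V$, $\tilde\Gamma^dV$ is a $\tilde\Gamma^dA$-supermodule via the natural action of $A^{\otimes d}$ on $V^{\otimes d}$ (with the sign $(-1)^{\langle\mathbf a,\mathbf v\rangle}$). *)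

theory Defs
  imports Main "HOL-Library.Multiset"
begin

(* R is modelled by a type 'r :: {idom, ring_char_0}; the PID property is an explicit hypothesis. *)
definition is_ideal_of :: "'r::comm_ring_1 set \<Rightarrow> bool" where
  "is_ideal_of I \<longleftrightarrow> 0 \<in> I \<and> (\<forall>x\<in>I. \<forall>y\<in>I. x + y \<in> I) \<and> (\<forall>r. \<forall>x\<in>I. r * x \<in> I)"

definition is_pid_type :: "'r::idom itself \<Rightarrow> bool" where
  "is_pid_type _ \<longleftrightarrow> (\<forall>I :: 'r set. is_ideal_of I \<longrightarrow> (\<exists>a. I = {a * x | x. True}))"

(* kind of a basis element: in B_a, in B_c, or odd (in B_1) *)
datatype kind = KA | KC | KOdd

abbreviation is_odd_k :: "kind \<Rightarrow> bool" where "is_odd_k k \<equiv> (k = KOdd)"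

(* Free modules with a finite chosen basis B (a finite subset of a type 'v, the total order on B
   is the restriction of the linorder of 'v); elements are coordinate functions 'v \<Rightarrow> 'r
   vanishing outside B. *)
definition elem_of :: "'v set \<Rightarrow> ('v \<Rightarrow> 'r::zero) \<Rightarrow> bool" where
  "elem_of B x \<longleftrightarrow> (\<forall>v. v \<notin> B \<longrightarrow> x v = 0)"

definition bvec :: "'v \<Rightarrow> 'v \<Rightarrow> 'r::{zero,one}" where
  "bvec b = (\<lambda>x. if x = b then 1 else 0)"

(* action of A (basis BA, structure constants act a v w = coefficient of w in a*v) on V (basis BV) *)
definition vact :: "'b set \<Rightarrow> 'v set \<Rightarrow> ('b \<Rightarrow> 'v \<Rightarrow> 'v \<Rightarrow> 'r::comm_ring_1)
                     \<Rightarrow> ('b \<Rightarrow> 'r) \<Rightarrow> ('v \<Rightarrow> 'r) \<Rightarrow> ('v \<Rightarrow> 'r)" where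
  "vact BA BV act x v = (\<lambda>w. if w \<in> BV then (\<Sum>a\<in>BA. \<Sum>u\<in>BV. x a * v u * act a u w) else 0)"

abbreviation amult :: "'b set \<Rightarrow> ('b \<Rightarrow> 'b \<Rightarrow> 'b \<Rightarrow> 'r::comm_ring_1)
                     \<Rightarrow> ('b \<Rightarrow> 'r) \<Rightarrow> ('b \<Rightarrow> 'r) \<Rightarrow> ('b \<Rightarrow> 'r)" where
  "amult BA M \<equiv> vact BA BA M"

(* A calibrated R-superalgebra: free with finite basis BA = B_a \<sqcup> B_c \<sqcup> B_1 (given by kA),
   A_0 = span(B_a \<union> B_c) = \<aa> \<oplus> \<cc>, A_1 = span B_1; associative, unital, supergraded;
   \<aa> = span B_a is a unital subalgebra. *)
definition calibrated_superalgebra ::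
  "'b set \<Rightarrow> ('b \<Rightarrow> kind) \<Rightarrow> ('b \<Rightarrow> 'b \<Rightarrow> 'b \<Rightarrow> 'r::comm_ring_1) \<Rightarrow> bool" where
  "calibrated_superalgebra BA kA M \<longleftrightarrow>
     finite BA \<and>
     (\<forall>a\<in>BA. \<forall>b\<in>BA. \<forall>c\<in>BA.
        amult BA M (amult BA M (bvec a) (bvec b)) (bvec c)
      = amult BA M (bvec a) (amult BA M (bvec b) (bvec c))) \<and>
     (\<exists>u. elem_of BA u \<and> (\<forall>b\<in>BA. u b \<noteq> 0 \<longrightarrow> kA b = KA) \<and>
          (\<forall>x. elem_of BA x \<longrightarrow> amult BA M u x = x \<and> amult BA M x u = x)) \<and>
     (\<forall>a\<in>BA. \<forall>b\<in>BA. \<forall>c\<in>BA. M a b c \<noteq> 0 \<longrightarrow>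
        (is_odd_k (kA c) \<longleftrightarrow> (is_odd_k (kA a) \<noteq> is_odd_k (kA b)))) \<and>
     (\<forall>a\<in>BA. \<forall>b\<in>BA. \<forall>c\<in>BA. kA a = KA \<and> kA b = KA \<and> M a b c \<noteq> 0 \<longrightarrow> kA c = KA)"

(* basis tuples of V^{\<otimes>d}; elements of V^{\<otimes>d} are functions 'v list \<Rightarrow> 'r supported on tlists d BV *)
definition tlists :: "nat \<Rightarrow> 'v set \<Rightarrow> 'v list set" where
  "tlists d B = {l. length l = d \<and> set l \<subseteq> B}"

definition sgn_pair :: "('b \<Rightarrow> kind) \<Rightarrow> ('v \<Rightarrow> kind) \<Rightarrow> 'b list \<Rightarrow> 'v list \<Rightarrow> nat" where
  "sgn_pair kA kV as vs = card {(k, l). l < k \<and> k < length as \<and> l < length vs \<and>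
                                    kA (as ! k) = KOdd \<and> kV (vs ! l) = KOdd}"

(* the action of A^{\<otimes>d} on V^{\<otimes>d}:
   (a_1\<otimes>..\<otimes>a_d)(v_1\<otimes>..\<otimes>v_d) = (-1)^<a,v> a_1v_1 \<otimes> .. \<otimes> a_dv_d, extended bilinearly *)
definition tact :: "nat \<Rightarrow> 'b set \<Rightarrow> 'v set \<Rightarrow> ('b \<Rightarrow> kind) \<Rightarrow> ('v \<Rightarrow> kind)
    \<Rightarrow> ('b \<Rightarrow> 'v \<Rightarrow> 'v \<Rightarrow> 'r::comm_ring_1) \<Rightarrow> ('b list \<Rightarrow> 'r) \<Rightarrow> ('v list \<Rightarrow> 'r) \<Rightarrow> ('v list \<Rightarrow> 'r)" where
  "tact d BA BV kA kV act X U = (\<lambda>ws. if ws \<in> tlists d BV then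
      (\<Sum>as\<in>tlists d BA. \<Sum>vs\<in>tlists d BV.
          X as * U vs * (-1) ^ sgn_pair kA kV as vs * (\<Prod>k<d. act (as ! k) (vs ! k) (ws ! k)))
      else 0)"

abbreviation tmult :: "nat \<Rightarrow> 'b set \<Rightarrow> ('b \<Rightarrow> kind) \<Rightarrow> ('b \<Rightarrow> 'b \<Rightarrow> 'b \<Rightarrow> 'r::comm_ring_1)
    \<Rightarrow> ('b list \<Rightarrow> 'r) \<Rightarrow> ('b list \<Rightarrow> 'r) \<Rightarrow> ('b list \<Rightarrow> 'r)" where
  "tmult d BA kA M \<equiv> tact d BA BA kA kA M"

definition tpow :: "nat \<Rightarrow> ('b \<Rightarrow> 'r::comm_ring_1) \<Rightarrow> ('b list \<Rightarrow> 'r)" where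
  "tpow d x = (\<lambda>as. if length as = d then (\<Prod>k<d. x (as ! k)) else 0)"

definition t_even :: "('v \<Rightarrow> kind) \<Rightarrow> ('v list \<Rightarrow> 'r::zero) \<Rightarrow> bool" where
  "t_even kV X \<longleftrightarrow> (\<forall>l. X l \<noteq> 0 \<longrightarrow> even (length (filter (\<lambda>v. kV v = KOdd) l)))"

definition t_odd :: "('v \<Rightarrow> kind) \<Rightarrow> ('v list \<Rightarrow> 'r::zero) \<Rightarrow> bool" where
  "t_odd kV X \<longleftrightarrow> (\<forall>l. X l \<noteq> 0 \<longrightarrow> odd (length (filter (\<lambda>v. kV v = KOdd) l)))"

definition odd_inv :: "('v::linorder \<Rightarrow> kind) \<Rightarrow> 'v list \<Rightarrow> nat" where
  "odd_inv kV b = card {(k, l). k < l \<and> l < length b \<and> kV (b ! k) = KOdd \<and> kV (b ! l) = KOdd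
                                \<and> b ! k > b ! l}"

definition cfact :: "('v \<Rightarrow> kind) \<Rightarrow> 'v list \<Rightarrow> nat" where
  "cfact kV b = (\<Prod>c\<in>{c \<in> set b. kV c = KC}. fact (count (mset b) c))"

definition seqs :: "'v set \<Rightarrow> ('v \<Rightarrow> kind) \<Rightarrow> nat \<Rightarrow> 'v list set" where
  "seqs B kV d = {b \<in> tlists d B. \<forall>v \<in> set b. kV v = KOdd \<longrightarrow> count (mset b) v = 1}"

(* x_b = sum over distinct place permutations b' of b of (-1)^(<b>+<b'>) b'_1 \<otimes> .. \<otimes> b'_d *)
definition xvec :: "('v::linorder \<Rightarrow> kind) \<Rightarrow> 'v list \<Rightarrow> ('v list \<Rightarrow> 'r::comm_ring_1)" where
  "xvec kV b = (\<lambda>w. if mset w = mset b then (-1) ^ (odd_inv kV b + odd_inv kV w) else 0)"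

definition yvec :: "('v::linorder \<Rightarrow> kind) \<Rightarrow> 'v list \<Rightarrow> ('v list \<Rightarrow> 'r::comm_ring_1)" where
  "yvec kV b = (\<lambda>w. of_nat (cfact kV b) * xvec kV b w)"

definition GammaT :: "nat \<Rightarrow> 'v::linorder set \<Rightarrow> ('v \<Rightarrow> kind) \<Rightarrow> ('v list \<Rightarrow> 'r::comm_ring_1) set" where
  "GammaT d B kV = {X. \<exists>c. X = (\<lambda>w. \<Sum>b\<in>seqs B kV d. c b * yvec kV b w)}"

(* If be = b or be = 0 for all basis elements b, then Ae is free with basis {b \<in> BA. be = b},
   (Ae)_a = \<aa>e spanned by those in B_a, (Ae)_c = \<cc>e spanned by those in B_c,
   (Ae)_1 spanned by the odd ones; A acts by left multiplication. *)
definition basis_Ae :: "'b set \<Rightarrow> ('b \<Rightarrow> 'b \<Rightarrow> 'b \<Rightarrow> 'r::comm_ring_1) \<Rightarrow> ('b \<Rightarrow> 'r) \<Rightarrow> 'b set" where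
  "basis_Ae BA M e = {b \<in> BA. amult BA M (bvec b) e = bvec b}"

end

theory Submission
  imports Defs
begin

text \<open>
  Write \<open>E\<close> for the basis elements \<open>b\<close> with \<open>be = b\<close>. Right multiplication by \<open>e\<close> fixes the
  elements of \<open>E\<close> and kills the other basis elements; since \<open>e\<close> lies in \<open>\<aa>\<close> it is even, so
  right multiplication by \<open>e\<^sup>\<otimes>\<^sup>d\<close> on \<open>A\<^sup>\<otimes>\<^sup>d\<close> involves no signs and is simply the coordinate
  projection onto the tuples with entries in \<open>E\<close>. The vector \<open>y\<^sub>b\<close> is supported on the
  rearrangements of \<open>b\<close>, so this projection sends \<open>y\<^sub>b\<close> to \<open>y\<^sub>b\<close> if \<open>b\<close> has all its entries in
  \<open>E\<close> and to \<open>0\<close> otherwise. Hence \<open>(\<tilde>\<Gamma>\<^sup>dA) e\<^sup>\<otimes>\<^sup>d\<close> and \<open>\<tilde>\<Gamma>\<^sup>d(Ae)\<close> are the same subset of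
  \<open>A\<^sup>\<otimes>\<^sup>d\<close>, and the isomorphism is the identity. It respects the actions because \<open>Ae\<close> is a
  left ideal: \<open>ab\<close> has no component outside \<open>E\<close> when \<open>b \<in> E\<close>, by \<open>ab = a(be) = (ab)e\<close>.
\<close>

lemma finite_tlists: "finite B \<Longrightarrow> finite (tlists d B)"
  unfolding tlists_def using finite_lists_length_eq[of B d] by (simp add: conj_commute)

lemma tlists_mono: "B \<subseteq> C \<Longrightarrow> tlists d B \<subseteq> tlists d C"
  by (auto simp: tlists_def)

lemma tlists_nth: "vs \<in> tlists d B \<Longrightarrow> k < d \<Longrightarrow> vs ! k \<in> B"
  by (auto simp: tlists_def)

lemma tlists_Suc: "tlists (Suc d) B = (\<lambda>(u, l). u # l) ` (B \<times> tlists d B)"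
  unfolding tlists_def by (auto simp: image_iff length_Suc_conv)

lemma sum_tlists_prod:
  fixes f :: "nat \<Rightarrow> 'v \<Rightarrow> 'r::comm_semiring_1"
  assumes "finite B"
  shows "(\<Sum>vs\<in>tlists d B. \<Prod>k<d. f k (vs ! k)) = (\<Prod>k<d. \<Sum>u\<in>B. f k u)"
proof (induction d arbitrary: f)
  case 0
  have "tlists 0 B = {[]}" by (auto simp: tlists_def)
  then show ?case by simp
next
  case (Suc d)
  have inj: "inj_on (\<lambda>(u, l). u # l) (B \<times> tlists d B)" by (auto simp: inj_on_def)
  have "(\<Sum>vs\<in>tlists (Suc d) B. \<Prod>k<Suc d. f k (vs ! k))
      = (\<Sum>u\<in>B. \<Sum>l\<in>tlists d B. f 0 u * (\<Prod>k<d. f (Suc k) (l ! k)))"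
    unfolding tlists_Suc sum.reindex[OF inj]
    by (simp add: sum.cartesian_product case_prod_beta prod.lessThan_Suc_shift del: prod.lessThan_Suc)
  also have "\<dots> = (\<Sum>u\<in>B. f 0 u) * (\<Prod>k<d. \<Sum>u\<in>B. f (Suc k) u)"
    by (simp add: Suc.IH[of "\<lambda>k. f (Suc k)"] sum_distrib_left[symmetric] sum_distrib_right)
  also have "\<dots> = (\<Prod>k<Suc d. \<Sum>u\<in>B. f k u)"
    by (simp add: prod.lessThan_Suc_shift del: prod.lessThan_Suc)
  finally show ?case .
qed

lemma prod_of_bool:
  "finite A \<Longrightarrow> (\<Prod>x\<in>A. of_bool (P x) :: 'r::comm_semiring_1) = of_bool (\<forall>x\<in>A. P x)"
  by (induction A rule: finite_induct) auto

lemma sum_bvec_mult: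
  fixes f :: "'v \<Rightarrow> 'r::semiring_1"
  assumes "finite B"
  shows "(\<Sum>x\<in>B. bvec a x * f x) = (if a \<in> B then f a else 0)"
proof -
  have "(\<Sum>x\<in>B. bvec a x * f x) = (\<Sum>x\<in>B. if a = x then f x else 0)"
    by (rule sum.cong) (auto simp: bvec_def)
  then show ?thesis using assms by simp
qed

lemma amult_bvec_left:
  assumes "finite BA" "a \<in> BA"
  shows "amult BA M (bvec a) y w = (if w \<in> BA then \<Sum>u\<in>BA. y u * M a u w else 0)"
proof -
  have "(\<Sum>x\<in>BA. \<Sum>u\<in>BA. bvec a x * y u * M x u w) = (\<Sum>x\<in>BA. bvec a x * (\<Sum>u\<in>BA. y u * M x u w))"
    by (simp add: sum_distrib_left mult.assoc)
  then show ?thesis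
    using assms by (simp add: vact_def sum_bvec_mult)
qed

lemma amult_bvec_bvec:
  assumes "finite BA" "a \<in> BA" "b \<in> BA" "c \<in> BA"
  shows "amult BA M (bvec a) (bvec b) c = M a b c"
  using assms by (simp add: amult_bvec_left sum_bvec_mult)

lemma amult_expand_left:
  assumes "finite BA"
  shows "amult BA M x y w = (\<Sum>a\<in>BA. x a * amult BA M (bvec a) y w)"
proof (cases "w \<in> BA")
  case True
  have "(\<Sum>a\<in>BA. x a * amult BA M (bvec a) y w) = (\<Sum>a\<in>BA. x a * (\<Sum>u\<in>BA. y u * M a u w))"
    using assms True by (intro sum.cong) (simp_all add: amult_bvec_left)
  then show ?thesis
    using True by (simp add: vact_def sum_distrib_left mult.assoc)
qed (simp add: vact_def)

lemma amult_expand_right: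
  assumes "finite BA"
  shows "amult BA M x y w = (\<Sum>u\<in>BA. y u * amult BA M x (bvec u) w)"
proof (cases "w \<in> BA")
  case True
  have "amult BA M x (bvec u) w = (\<Sum>a\<in>BA. x a * M a u w)" if "u \<in> BA" for u
    unfolding amult_expand_left[OF assms, of M x]
    using assms True that by (intro sum.cong) (simp_all add: amult_bvec_bvec)
  then have "(\<Sum>u\<in>BA. y u * amult BA M x (bvec u) w) = (\<Sum>u\<in>BA. y u * (\<Sum>a\<in>BA. x a * M a u w))"
    by (intro sum.cong) simp_all
  also have "\<dots> = (\<Sum>a\<in>BA. \<Sum>u\<in>BA. x a * y u * M a u w)"
    by (subst sum.swap) (simp add: sum_distrib_left mult_ac)
  finally show ?thesis
    using True by (simp add: vact_def)
qed (simp add: vact_def)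

lemma amult_assoc_bvec_bvec:
  assumes fin: "finite BA"
    and assoc: "\<forall>a\<in>BA. \<forall>b\<in>BA. \<forall>c\<in>BA.
      amult BA M (amult BA M (bvec a) (bvec b)) (bvec c) = amult BA M (bvec a) (amult BA M (bvec b) (bvec c))"
    and a: "a \<in> BA" and b: "b \<in> BA"
  shows "amult BA M (amult BA M (bvec a) (bvec b)) y w = amult BA M (bvec a) (amult BA M (bvec b) y) w"
proof -
  have "amult BA M (amult BA M (bvec a) (bvec b)) y w
      = (\<Sum>u\<in>BA. y u * amult BA M (bvec a) (amult BA M (bvec b) (bvec u)) w)"
    using assoc a b by (subst amult_expand_right[OF fin]) simp
  also have "\<dots> = (\<Sum>u\<in>BA. y u * (\<Sum>v\<in>BA. amult BA M (bvec b) (bvec u) v * amult BA M (bvec a) (bvec v) w))"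
    by (subst amult_expand_right[OF fin]) simp
  also have "\<dots> = (\<Sum>v\<in>BA. (\<Sum>u\<in>BA. y u * amult BA M (bvec b) (bvec u) v) * amult BA M (bvec a) (bvec v) w)"
    by (simp add: sum_distrib_left sum_distrib_right mult.assoc) (rule sum.swap)
  also have "\<dots> = (\<Sum>v\<in>BA. amult BA M (bvec b) y v * amult BA M (bvec a) (bvec v) w)"
    by (simp only: amult_expand_right[OF fin, of M "bvec b" y])
  also have "\<dots> = amult BA M (bvec a) (amult BA M (bvec b) y) w"
    by (rule amult_expand_right[OF fin, symmetric])
  finally show ?thesis .
qed

lemma basis_Ae_subset: "basis_Ae BA M e \<subseteq> BA"
  by (auto simp: basis_Ae_def)

lemma amult_bvec_right_idem:
  assumes "\<forall>b\<in>BA. amult BA M (bvec b) e = bvec b \<or> amult BA M (bvec b) e = (\<lambda>_. 0)" "b \<in> BA"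
  shows "amult BA M (bvec b) e = (if b \<in> basis_Ae BA M e then bvec b else (\<lambda>_. 0))"
  using assms by (auto simp: basis_Ae_def)

lemma amult_bvec_right_idem_coeff:
  assumes fin: "finite BA"
    and e_basis: "\<forall>b\<in>BA. amult BA M (bvec b) e = bvec b \<or> amult BA M (bvec b) e = (\<lambda>_. 0)"
    and a: "a \<in> BA" and w: "w \<in> BA"
  shows "(\<Sum>u\<in>BA. e u * M a u w) = of_bool (a \<in> basis_Ae BA M e \<and> w = a)"
proof -
  have "(\<Sum>u\<in>BA. e u * M a u w) = amult BA M (bvec a) e w"
    using w by (simp add: amult_bvec_left[OF fin a])
  then show ?thesis
    by (simp add: amult_bvec_right_idem[OF e_basis a]) (simp add: bvec_def)
qed

lemma basis_Ae_left_ideal: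
  assumes A: "calibrated_superalgebra BA kA M"
    and e_basis: "\<forall>b\<in>BA. amult BA M (bvec b) e = bvec b \<or> amult BA M (bvec b) e = (\<lambda>_. 0)"
    and a: "a \<in> BA" and b: "b \<in> basis_Ae BA M e" and c: "c \<in> BA - basis_Ae BA M e"
  shows "M a b c = 0"
proof -
  have fin: "finite BA" using A by (simp add: calibrated_superalgebra_def)
  have b_BA: "b \<in> BA" using b by (simp add: basis_Ae_def)
  have "M a b c = amult BA M (bvec a) (amult BA M (bvec b) e) c"
    using b c by (simp add: basis_Ae_def amult_bvec_bvec[OF fin a b_BA])
  also have "\<dots> = amult BA M (amult BA M (bvec a) (bvec b)) e c"
    using A a b_BA by (simp add: amult_assoc_bvec_bvec[OF fin] calibrated_superalgebra_def)
  also have "\<dots> = (\<Sum>x\<in>BA. amult BA M (bvec a) (bvec b) x * amult BA M (bvec x) e c)"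
    by (rule amult_expand_left[OF fin])
  also have "\<dots> = 0"
  proof (intro sum.neutral ballI)
    fix x assume "x \<in> BA"
    then have "amult BA M (bvec x) e c = 0"
      using c by (subst amult_bvec_right_idem[OF e_basis]) (auto simp: bvec_def)
    then show "amult BA M (bvec a) (bvec b) x * amult BA M (bvec x) e c = 0" by simp
  qed
  finally show ?thesis .
qed

definition trestrict :: "nat \<Rightarrow> 'v set \<Rightarrow> ('v list \<Rightarrow> 'r::zero) \<Rightarrow> 'v list \<Rightarrow> 'r" where
  "trestrict d E X = (\<lambda>ws. if ws \<in> tlists d E then X ws else 0)"

lemma sgn_pair_eq_0:
  assumes "\<forall>l<length vs. kV (vs ! l) \<noteq> KOdd"
  shows "sgn_pair kA kV as vs = 0"
proof -
  have "{(k, l). l < k \<and> k < length as \<and> l < length vs \<and> kA (as ! k) = KOdd \<and> kV (vs ! l) = KOdd} = {}"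
    using assms by auto
  then show ?thesis by (simp only: sgn_pair_def card.empty)
qed

lemma tpow_tlists: "vs \<in> tlists d B \<Longrightarrow> tpow d e vs = (\<Prod>k<d. e (vs ! k))"
  by (simp add: tpow_def tlists_def)

lemma tpow_sgn_pair:
  assumes e_even: "\<forall>b\<in>B. e b \<noteq> 0 \<longrightarrow> kV b \<noteq> KOdd" and vs: "vs \<in> tlists d B"
  shows "tpow d e vs * (-1) ^ sgn_pair kA kV as vs = tpow d e vs"
proof (cases "\<forall>k<d. e (vs ! k) \<noteq> 0")
  case True
  then have "sgn_pair kA kV as vs = 0"
    using vs e_even by (intro sgn_pair_eq_0) (auto simp: tlists_def dest: nth_mem)
  then show ?thesis by simp
next
  case False
  then have "tpow d e vs = 0"
    unfolding tpow_tlists[OF vs] by (intro prod_zero) auto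
  then show ?thesis by simp
qed

lemma prod_amult_bvec_right_idem_coeff:
  assumes fin: "finite BA"
    and e_basis: "\<forall>b\<in>BA. amult BA M (bvec b) e = bvec b \<or> amult BA M (bvec b) e = (\<lambda>_. 0)"
    and as: "as \<in> tlists d BA" and ws: "ws \<in> tlists d BA"
  shows "(\<Prod>k<d. \<Sum>u\<in>BA. e u * M (as ! k) u (ws ! k)) = of_bool (as = ws \<and> ws \<in> tlists d (basis_Ae BA M e))"
proof -
  let ?E = "basis_Ae BA M e"
  have "(\<Prod>k<d. \<Sum>u\<in>BA. e u * M (as ! k) u (ws ! k)) = (\<Prod>k<d. of_bool (as ! k \<in> ?E \<and> ws ! k = as ! k))"
    by (intro prod.cong refl amult_bvec_right_idem_coeff[OF fin e_basis] tlists_nth[OF as] tlists_nth[OF ws]) simp_all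
  also have "\<dots> = of_bool (\<forall>k\<in>{..<d}. as ! k \<in> ?E \<and> ws ! k = as ! k)"
    by (rule prod_of_bool) simp
  also have "(\<forall>k\<in>{..<d}. as ! k \<in> ?E \<and> ws ! k = as ! k) \<longleftrightarrow> as = ws \<and> ws \<in> tlists d ?E"
    using as ws by (auto simp: tlists_def set_conv_nth intro: nth_equalityI)
  finally show ?thesis .
qed

lemma tmult_tpow_eq_trestrict:
  assumes fin: "finite BA"
    and e_in_a: "\<forall>b\<in>BA. e b \<noteq> 0 \<longrightarrow> kA b = KA"
    and e_basis: "\<forall>b\<in>BA. amult BA M (bvec b) e = bvec b \<or> amult BA M (bvec b) e = (\<lambda>_. 0)"
  shows "tmult d BA kA M X (tpow d e) = trestrict d (basis_Ae BA M e) X"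
proof
  fix ws
  let ?E = "basis_Ae BA M e"
  show "tmult d BA kA M X (tpow d e) ws = trestrict d ?E X ws"
  proof (cases "ws \<in> tlists d BA")
    case False
    then have "ws \<notin> tlists d ?E" using tlists_mono[OF basis_Ae_subset] by blast
    with False show ?thesis by (simp add: tact_def trestrict_def)
  next
    case ws: True
    have e_even: "\<forall>b\<in>BA. e b \<noteq> 0 \<longrightarrow> kA b \<noteq> KOdd" using e_in_a by auto
    have "X as * tpow d e vs * (-1) ^ sgn_pair kA kA as vs * (\<Prod>k<d. M (as ! k) (vs ! k) (ws ! k))
        = X as * (\<Prod>k<d. e (vs ! k) * M (as ! k) (vs ! k) (ws ! k))" if "vs \<in> tlists d BA" for as vs
      by (subst mult.assoc[of "X as"], subst tpow_sgn_pair[OF e_even that])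
         (simp add: tpow_tlists[OF that] prod.distrib mult.assoc)
    then have "tmult d BA kA M X (tpow d e) ws
        = (\<Sum>as\<in>tlists d BA. X as * (\<Sum>vs\<in>tlists d BA. \<Prod>k<d. e (vs ! k) * M (as ! k) (vs ! k) (ws ! k)))"
      using ws by (simp add: tact_def sum_distrib_left)
    also have "\<dots> = (\<Sum>as\<in>tlists d BA. X as * (\<Prod>k<d. \<Sum>u\<in>BA. e u * M (as ! k) u (ws ! k)))"
      using sum_tlists_prod[OF fin, of "\<lambda>k u. e u * M (_ ! k) u (ws ! k)" d] by simp
    also have "\<dots> = (\<Sum>as\<in>tlists d BA. X as * of_bool (as = ws \<and> ws \<in> tlists d ?E))"
      using prod_amult_bvec_right_idem_coeff[OF fin e_basis _ ws] by (intro sum.cong) simp_all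
    also have "\<dots> = trestrict d ?E X ws"
      using ws fin by (auto simp: trestrict_def finite_tlists)
    finally show ?thesis .
  qed
qed

lemma yvec_nonzero_mset: "yvec kV b w \<noteq> 0 \<Longrightarrow> mset w = mset b"
  by (auto simp: yvec_def xvec_def split: if_splits)

lemma seqs_mono: "B \<subseteq> C \<Longrightarrow> seqs B kV d \<subseteq> seqs C kV d"
  by (auto simp: seqs_def tlists_def)

lemma seqs_perm_tlists_iff:
  assumes "b \<in> seqs B kV d" "mset w = mset b"
  shows "w \<in> tlists d E \<longleftrightarrow> b \<in> seqs E kV d"
proof -
  have "set w = set b"
    using assms(2) by (metis set_mset_mset)
  moreover have "length w = length b"
    using assms(2) by (rule mset_eq_length)
  ultimately show ?thesis
    using assms(1) by (auto simp: seqs_def tlists_def)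
qed

lemma GammaT_support:
  fixes x :: "'v::linorder list \<Rightarrow> 'r::comm_ring_1"
  assumes "x \<in> GammaT d B kV" "x w \<noteq> 0"
  shows "w \<in> tlists d B"
proof -
  obtain c where "x w = (\<Sum>b\<in>seqs B kV d. c b * yvec kV b w)"
    using assms(1) by (auto simp: GammaT_def)
  with assms(2) obtain b where b: "b \<in> seqs B kV d" and "c b * yvec kV b w \<noteq> 0"
    by (metis (mono_tags, lifting) sum.neutral)
  then have "yvec kV b w \<noteq> (0::'r)" by auto
  then show ?thesis
    using seqs_perm_tlists_iff[OF b yvec_nonzero_mset] b by blast
qed

lemma GammaT_eq_range:
  "GammaT d B kV = range (\<lambda>c w. \<Sum>b\<in>seqs B kV d. c b * yvec kV b w)"
  by (auto simp: GammaT_def)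

lemma trestrict_yvec_sum:
  fixes c :: "'v::linorder list \<Rightarrow> 'r::comm_ring_1"
  assumes fin: "finite B" and sub: "E \<subseteq> B"
  shows "trestrict d E (\<lambda>w. \<Sum>b\<in>seqs B kV d. c b * yvec kV b w) = (\<lambda>w. \<Sum>b\<in>seqs E kV d. c b * yvec kV b w)"
proof
  fix w
  have fin_seqs: "finite (seqs B kV d)"
    using finite_tlists[OF fin] by (rule rev_finite_subset) (auto simp: seqs_def)
  have "(if w \<in> tlists d E then c b * yvec kV b w else 0) = (if b \<in> seqs E kV d then c b * yvec kV b w else 0)"
    if "b \<in> seqs B kV d" for b
  proof (cases "c b * yvec kV b w = 0")
    case False
    then have "yvec kV b w \<noteq> (0::'r)" by auto
    then have "w \<in> tlists d E \<longleftrightarrow> b \<in> seqs E kV d"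
      by (intro seqs_perm_tlists_iff[OF that] yvec_nonzero_mset)
    then show ?thesis by simp
  qed simp
  then have "trestrict d E (\<lambda>w. \<Sum>b\<in>seqs B kV d. c b * yvec kV b w) w
      = (\<Sum>b\<in>seqs B kV d. if b \<in> seqs E kV d then c b * yvec kV b w else 0)"
    unfolding trestrict_def by (cases "w \<in> tlists d E") (simp_all cong: sum.cong)
  also have "\<dots> = (\<Sum>b\<in>seqs E kV d. c b * yvec kV b w)"
    using seqs_mono[OF sub, of kV d] by (simp add: sum.inter_restrict[OF fin_seqs, symmetric] Int_absorb1)
  finally show "trestrict d E (\<lambda>w. \<Sum>b\<in>seqs B kV d. c b * yvec kV b w) w = (\<Sum>b\<in>seqs E kV d. c b * yvec kV b w)" .
qed

lemma trestrict_GammaT: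
  assumes "finite B" "E \<subseteq> B"
  shows "trestrict d E ` GammaT d B kV = GammaT d E kV"
  unfolding GammaT_eq_range image_image trestrict_yvec_sum[OF assms] ..

lemma tact_outside_subbasis:
  assumes closed: "\<And>a b c. a \<in> BA \<Longrightarrow> b \<in> E \<Longrightarrow> c \<in> BA - E \<Longrightarrow> M a b c = 0"
    and supp: "\<And>vs. vs \<notin> tlists d E \<Longrightarrow> U vs = 0"
    and ws: "ws \<in> tlists d BA - tlists d E"
  shows "tact d BA BA kA kV M X U ws = 0"
proof -
  obtain k where k: "k < d" "ws ! k \<in> BA - E"
    using ws by (auto simp: tlists_def set_conv_nth)
  have "X as * U vs * (-1) ^ sgn_pair kA kV as vs * (\<Prod>k<d. M (as ! k) (vs ! k) (ws ! k)) = 0"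
    if "as \<in> tlists d BA" for as vs
  proof (cases "vs \<in> tlists d E")
    case True
    then have "M (as ! k) (vs ! k) (ws ! k) = 0"
      using k tlists_nth[OF that] tlists_nth[OF True] closed by blast
    then have "(\<Prod>k<d. M (as ! k) (vs ! k) (ws ! k)) = 0"
      using k(1) by (intro prod_zero) auto
    then show ?thesis by simp
  qed (simp add: supp)
  then show ?thesis by (simp add: tact_def)
qed

lemma tact_subbasis_eq:
  assumes fin: "finite BA" and sub: "E \<subseteq> BA"
    and closed: "\<And>a b c. a \<in> BA \<Longrightarrow> b \<in> E \<Longrightarrow> c \<in> BA - E \<Longrightarrow> M a b c = 0"
    and supp: "\<And>vs. vs \<notin> tlists d E \<Longrightarrow> U vs = 0"
  shows "tact d BA E kA kV M X U = tact d BA BA kA kV M X U"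
proof
  fix ws
  consider "ws \<in> tlists d E" | "ws \<in> tlists d BA - tlists d E" | "ws \<notin> tlists d BA"
    by blast
  then show "tact d BA E kA kV M X U ws = tact d BA BA kA kV M X U ws"
  proof cases
    case 1
    have "(\<Sum>vs\<in>tlists d E. X as * U vs * (-1) ^ sgn_pair kA kV as vs * (\<Prod>k<d. M (as ! k) (vs ! k) (ws ! k)))
        = (\<Sum>vs\<in>tlists d BA. X as * U vs * (-1) ^ sgn_pair kA kV as vs * (\<Prod>k<d. M (as ! k) (vs ! k) (ws ! k)))"
      for as
      by (rule sum.mono_neutral_left) (auto simp: finite_tlists[OF fin] tlists_mono[OF sub] supp)
    then show ?thesis
      using 1 tlists_mono[OF sub] by (auto simp: tact_def)
  next
    case 2
    then have "tact d BA E kA kV M X U ws = 0" by (simp add: tact_def)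
    with tact_outside_subbasis[OF closed supp 2] show ?thesis by simp
  next
    case 3
    then show ?thesis
      using tlists_mono[OF sub] by (auto simp: tact_def)
  qed
qed

theorem lemma3p17:
  fixes BA :: "'b::linorder set" and kA :: "'b \<Rightarrow> kind"
    and M :: "'b \<Rightarrow> 'b \<Rightarrow> 'b \<Rightarrow> 'r::{idom, ring_char_0}"
    and e :: "'b \<Rightarrow> 'r" and d :: nat
  assumes pid: "is_pid_type TYPE('r)"
    and A: "calibrated_superalgebra BA kA M"
    and e_elem: "elem_of BA e"
    and e_in_a: "\<forall>b\<in>BA. e b \<noteq> 0 \<longrightarrow> kA b = KA"
    and e_idem: "amult BA M e e = e"
    and e_basis: "\<forall>b\<in>BA. amult BA M (bvec b) e = bvec b \<or> amult BA M (bvec b) e = (\<lambda>_. 0)"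
  shows "\<exists>\<phi>. bij_betw \<phi> (GammaT d (basis_Ae BA M e) kA)
                        {tmult d BA kA M X (tpow d e) | X. X \<in> GammaT d BA kA}
          \<and> (\<forall>x\<in>GammaT d (basis_Ae BA M e) kA. \<forall>y\<in>GammaT d (basis_Ae BA M e) kA.
                \<phi> (\<lambda>w. x w + y w) = (\<lambda>w. \<phi> x w + \<phi> y w))
          \<and> (\<forall>r. \<forall>x\<in>GammaT d (basis_Ae BA M e) kA. \<phi> (\<lambda>w. r * x w) = (\<lambda>w. r * \<phi> x w))
          \<and> (\<forall>x\<in>GammaT d (basis_Ae BA M e) kA. t_even kA x \<longrightarrow> t_even kA (\<phi> x))
          \<and> (\<forall>x\<in>GammaT d (basis_Ae BA M e) kA. t_odd kA x \<longrightarrow> t_odd kA (\<phi> x))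
          \<and> (\<forall>X\<in>GammaT d BA kA. \<forall>v\<in>GammaT d (basis_Ae BA M e) kA.
                \<phi> (tact d BA (basis_Ae BA M e) kA kA M X v) = tmult d BA kA M X (\<phi> v))"
proof -
  let ?E = "basis_Ae BA M e"
  have fin: "finite BA" using A by (simp add: calibrated_superalgebra_def)
  have "{tmult d BA kA M X (tpow d e) | X. X \<in> GammaT d BA kA} = trestrict d ?E ` GammaT d BA kA"
    by (simp add: tmult_tpow_eq_trestrict[OF fin e_in_a e_basis] Setcompr_eq_image)
  also have "\<dots> = GammaT d ?E kA"
    by (rule trestrict_GammaT[OF fin basis_Ae_subset])
  finally have image: "{tmult d BA kA M X (tpow d e) | X. X \<in> GammaT d BA kA} = GammaT d ?E kA" .
  have action: "tact d BA ?E kA kA M X v = tmult d BA kA M X v" if "v \<in> GammaT d ?E kA" for X v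
    using basis_Ae_left_ideal[OF A e_basis] GammaT_support[OF that]
    by (intro tact_subbasis_eq[OF fin basis_Ae_subset]) blast+
  \<comment> \<open>the identity works\<close>
  show ?thesis
    by (rule exI[of _ id]) (simp add: image action)
qed

end
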